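(* For any $T>0$: $$\Pr[\tau^\downarrow_\gamma\le T]\le T\exp\Big(-\Omega\Big(\frac{n\sqrt{\gamma_0}}{T}\Big)\Big)\ \text{for 3-Majority},\qquad \Pr[\tau^\downarrow_\gamma\le T]\le T\exp\Big(-\Omega\Big(\frac{n}{T+\gamma_0^{-1/2}}\Big)\Big)\ \text{for 2-Choices}.$$ In particular, let $C>0$ be a sufficiently large constant. Suppose $\gamma_0\ge C\log n/\sqrt n$ for 3-Majority, or $\gamma_0\ge(C\log n)^2/n$ for 2-Choices. Then $\Pr[\tau^\downarrow_\gamma\le C\log n/\gamma_0]\le O(n^{-10})$.
   Context: **Setting.** Let $V$ be a set of $n$ vertices and $k\in\{1,\dots,n\}$. A configuration is a map $\mathsf{opn}\colon V\to[k]$. The process is synchronous: each round $t\ge1$ produces $\mathsf{opn}_t$ from $\mathsf{opn}_{t-1}$, and all vertices make their choices independently. **3-Majority.** Each vertex $v$ samples $w_1,w_2,w_3\in V$ independently and uniformly, with replacement. It sets $\mathsf{opn}_t(v)=\mathsf{opn}_{t-1}(w_1)$ if $\mathsf{opn}_{t-1}(w_1)=\mathsf{opn}_{t-1}(w_2)$, and $\mathsf{opn}_t(v)=\mathsf{opn}_{t-1}(w_3)$ otherwise. **2-Choices.** Each vertex $v$ samples $w_1,w_2\in V$ independently and uniformly, with replacement. It sets $\mathsf{opn}_t(v)=\mathsf{opn}_{t-1}(w_1)$ if $\mathsf{opn}_{t-1}(w_1)=\mathsf{opn}_{t-1}(w_2)$, and $\mathsf{opn}_t(v)=\mathsf{opn}_{t-1}(v)$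 otherwise. **Basic quantities.** - $\alpha_t(i)=|\{v:\mathsf{opn}_t(v)=i\}|/n$. - $\gamma_t=\sum_i\alpha_t(i)^2$. **Stopping time.** For a fixed constant $c^\downarrow_\gamma\in(0,1)$, $\tau^\downarrow_\gamma=\inf\{t\ge0:\gamma_t\le(1-c^\downarrow_\gamma)\gamma_0\}$. **Conventions.** $\Omega(\cdot)$ hides positive constants independent of $n$, $k$, $T$ and the configuration. *)

theory Defs
  imports "HOL-Probability.Probability"
begin

text \<open>Vertices are V = {0..<n}; opinions are labels in [k] = {1..k}.
  A configuration is a map nat => nat (values outside V are irrelevant; the
  random step sets them to the default 0).\<close>

type_synonym config = "nat \<Rightarrow> nat"

definition alpha :: "nat \<Rightarrow> config \<Rightarrow> nat \<Rightarrow> real" where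
  "alpha n opn i = real (card {v \<in> {..<n}. opn v = i}) / real n"

definition gamma :: "nat \<Rightarrow> nat \<Rightarrow> config \<Rightarrow> real" where
  "gamma n k opn = (\<Sum>i\<in>{1..k}. (alpha n opn i)\<^sup>2)"

definition unif_vertex :: "nat \<Rightarrow> nat pmf" where
  "unif_vertex n = pmf_of_set {..<n}"

definition three_majority_step :: "nat \<Rightarrow> config \<Rightarrow> config pmf" where
  "three_majority_step n opn =
     Pi_pmf {..<n} 0 (\<lambda>v.
       bind_pmf (unif_vertex n) (\<lambda>w1.
       bind_pmf (unif_vertex n) (\<lambda>w2.
       bind_pmf (unif_vertex n) (\<lambda>w3.
         return_pmf (if opn w1 = opn w2 then opn w1 else opn w3)))))"

definition two_choices_step :: "nat \<Rightarrow> config \<Rightarrow> config pmf" where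
  "two_choices_step n opn =
     Pi_pmf {..<n} 0 (\<lambda>v.
       bind_pmf (unif_vertex n) (\<lambda>w1.
       bind_pmf (unif_vertex n) (\<lambda>w2.
         return_pmf (if opn w1 = opn w2 then opn w1 else opn v))))"

fun trajectory :: "(config \<Rightarrow> config pmf) \<Rightarrow> config \<Rightarrow> nat \<Rightarrow> config list pmf" where
  "trajectory step opn0 0 = return_pmf [opn0]"
| "trajectory step opn0 (Suc t) =
     bind_pmf (trajectory step opn0 t) (\<lambda>xs. map_pmf (\<lambda>y. xs @ [y]) (step (last xs)))"

text \<open>Pr[tau_gamma_down <= T], where
  tau = inf {t >= 0. gamma_t <= (1 - c) * gamma_0}.\<close>
definition prob_tau_le :: "(config \<Rightarrow> config pmf) \<Rightarrow> nat \<Rightarrow> nat \<Rightarrow> real \<Rightarrow> config \<Rightarrow> nat \<Rightarrow> real" where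
  "prob_tau_le step n k c opn0 T =
     measure_pmf.prob (trajectory step opn0 T)
       {xs. \<exists>t\<le>T. gamma n k (xs ! t) \<le> (1 - c) * gamma n k opn0}"

definition valid_config :: "nat \<Rightarrow> nat \<Rightarrow> config \<Rightarrow> bool" where
  "valid_config n k opn \<longleftrightarrow> (\<forall>v<n. opn v \<in> {1..k})"

end

(* The potential S = sqrt gamma does not decrease in expectation, and by Cauchy-Schwarz its
   value after one round dominates a sum of independent per-vertex contributions. Bounding their
   exponential moments gives E[exp (-theta S_(t+1))] <= exp (-theta S_t + theta^2 q), with noise q
   of order S/n for 3-Majority and gamma/n for 2-Choices. A drop of S from s0 to (1 - 2 delta) s0
   within T rounds contains an excursion that starts at the last time S was at least s0; along it
   exp (-theta S) grows in expectation by at most exp (theta^2 q) per round, so a union bound over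
   the start and the end of the excursion bounds the probability by
   T^2 exp (-theta delta s0 + T theta^2 q). Taking theta of order delta n / T for 3-Majority and
   delta n / (T s0 + 1) for 2-Choices, and using that a probability is at most 1 to pass from T^2
   to T, gives the tail bounds; the logarithmic-time statements are arithmetic consequences. *)

theory Submission
  imports Defs
begin

lemma sum_vertices_by_opinion:
  assumes "n > 0" and "valid_config n k x"
  shows "(\<Sum>w<n. g (x w)) = real n * (\<Sum>i\<in>{1..k}. alpha n x i * g i)"
proof -
  have "(\<Sum>w<n. g (x w)) = (\<Sum>w<n. \<Sum>i\<in>{1..k}. if x w = i then g i else 0)"
    using assms(2) unfolding valid_config_def by (intro sum.cong) (auto simp: sum.delta)
  also have "\<dots> = (\<Sum>i\<in>{1..k}. real (card {w\<in>{..<n}. x w = i}) * g i)"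
    by (subst sum.swap) (intro sum.cong refl, simp add: sum.If_cases Int_def conj_commute)
  also have "\<dots> = real n * (\<Sum>i\<in>{1..k}. alpha n x i * g i)"
    using assms(1) by (simp add: alpha_def sum_distrib_left)
  finally show ?thesis .
qed

lemma sum_vertex_pairs_by_opinion:
  assumes n: "n > 0" and x: "valid_config n k x"
  shows "(\<Sum>w1<n. \<Sum>w2<n. if x w1 = x w2 then g (x w1) else 0)
       = (real n)\<^sup>2 * (\<Sum>i\<in>{1..k}. (alpha n x i)\<^sup>2 * g i)"
proof -
  have "(\<Sum>w2<n. if x w1 = x w2 then g (x w1) else 0) = real n * (alpha n x (x w1) * g (x w1))"
    if "w1 < n" for w1
  proof -
    have "x w1 \<in> {1..k}" using x that unfolding valid_config_def by auto
    then show ?thesis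
      using sum_vertices_by_opinion[OF n x, of "\<lambda>i. if x w1 = i then g (x w1) else 0"]
      by (simp add: if_distrib sum.delta cong: if_cong)
  qed
  then have "(\<Sum>w1<n. \<Sum>w2<n. if x w1 = x w2 then g (x w1) else 0)
      = (\<Sum>w1<n. real n * (alpha n x (x w1) * g (x w1)))" by (intro sum.cong) auto
  also have "\<dots> = real n * (real n * (\<Sum>i\<in>{1..k}. alpha n x i * (alpha n x i * g i)))"
    using sum_vertices_by_opinion[OF n x, of "\<lambda>i. alpha n x i * g i"]
    by (simp add: sum_distrib_left[symmetric])
  finally show ?thesis by (simp add: power2_eq_square mult.assoc)
qed

lemma alpha_nonneg: "alpha n x i \<ge> 0"
  by (simp add: alpha_def)

lemma alpha_le_1: "alpha n x i \<le> 1"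
proof (cases "n = 0")
  case False
  have "card {w\<in>{..<n}. x w = i} \<le> card {..<n}" by (intro card_mono) auto
  then show ?thesis using False by (simp add: alpha_def)
qed (simp add: alpha_def)

lemma sum_alpha_eq_1:
  assumes "n > 0" and "valid_config n k x"
  shows "(\<Sum>i\<in>{1..k}. alpha n x i) = 1"
  using sum_vertices_by_opinion[OF assms, of "\<lambda>_. 1"] assms(1) by simp

lemma gamma_nonneg: "gamma n k x \<ge> 0"
  unfolding gamma_def by (intro sum_nonneg) auto

lemma gamma_le_1:
  assumes "n > 0" and "valid_config n k x"
  shows "gamma n k x \<le> 1"
proof -
  have "gamma n k x \<le> (\<Sum>i\<in>{1..k}. alpha n x i)"
    unfolding gamma_def power2_eq_square
    by (intro sum_mono) (metis alpha_le_1 alpha_nonneg mult_left_le)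
  then show ?thesis using sum_alpha_eq_1[OF assms] by simp
qed

lemma alpha_le_sqrt_gamma:
  assumes "i \<in> {1..k}"
  shows "alpha n x i \<le> sqrt (gamma n k x)"
proof -
  have "(alpha n x i)\<^sup>2 \<le> gamma n k x"
    unfolding gamma_def using assms by (intro member_le_sum) auto
  then show ?thesis using alpha_nonneg real_le_rsqrt by blast
qed

lemma gamma_pos:
  assumes n: "n > 0" and x: "valid_config n k x"
  shows "gamma n k x > 0"
proof -
  have "card {w\<in>{..<n}. x w = x 0} > 0"
    using n by (subst card_gt_0_iff) auto
  then have "alpha n x (x 0) > 0" using n by (simp add: alpha_def)
  moreover have "x 0 \<in> {1..k}" using x n unfolding valid_config_def by auto
  ultimately show ?thesis
    using alpha_le_sqrt_gamma[of "x 0" k n x] by (metis less_le_trans real_sqrt_gt_0_iff)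
qed

lemma gamma_sq_le_sum_alpha_cube:
  assumes "n > 0" and "valid_config n k x"
  shows "(gamma n k x)\<^sup>2 \<le> (\<Sum>i\<in>{1..k}. alpha n x i ^ 3)"
proof -
  let ?g = "gamma n k x"
  have "0 \<le> (\<Sum>i\<in>{1..k}. alpha n x i * (alpha n x i - ?g)\<^sup>2)"
    by (intro sum_nonneg mult_nonneg_nonneg alpha_nonneg) auto
  also have "\<dots> = (\<Sum>i\<in>{1..k}. alpha n x i ^ 3) - 2 * ?g * (\<Sum>i\<in>{1..k}. (alpha n x i)\<^sup>2)
                 + ?g\<^sup>2 * (\<Sum>i\<in>{1..k}. alpha n x i)"
    by (simp add: sum_subtractf sum.distrib sum_distrib_left power2_eq_square power3_eq_cube
        algebra_simps)
  also have "\<dots> = (\<Sum>i\<in>{1..k}. alpha n x i ^ 3) - ?g\<^sup>2"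
    using sum_alpha_eq_1[OF assms] by (simp add: gamma_def power2_eq_square)
  finally show ?thesis by simp
qed

lemma sum_alpha_le_sqrt_gamma_mult:
  assumes "n > 0" and "valid_config n k y"
  shows "(\<Sum>w<n. alpha n x (y w)) / real n \<le> sqrt (gamma n k x) * sqrt (gamma n k y)"
proof -
  have "(\<Sum>i\<in>{1..k}. alpha n y i * alpha n x i)\<^sup>2 \<le> gamma n k y * gamma n k x"
    unfolding gamma_def by (rule Cauchy_Schwarz_ineq_sum)
  then have "(\<Sum>i\<in>{1..k}. alpha n y i * alpha n x i) \<le> sqrt (gamma n k y) * sqrt (gamma n k x)"
    by (metis gamma_nonneg real_le_rsqrt real_sqrt_mult)
  then show ?thesis
    using sum_vertices_by_opinion[OF assms, of "alpha n x"] assms(1) by (simp add: mult.commute)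
qed

section \<open>One round of 3-Majority and 2-Choices\<close>

definition collision_or :: "nat \<Rightarrow> config \<Rightarrow> nat pmf \<Rightarrow> nat pmf" where
  "collision_or n x F =
     bind_pmf (unif_vertex n) (\<lambda>w1. bind_pmf (unif_vertex n) (\<lambda>w2.
       if x w1 = x w2 then return_pmf (x w1) else F))"

lemma three_majority_step_eq_Pi_pmf:
  "three_majority_step n x = Pi_pmf {..<n} 0 (\<lambda>_. collision_or n x (map_pmf x (unif_vertex n)))"
  unfolding three_majority_step_def collision_or_def map_pmf_def
  by (intro Pi_pmf_cong bind_pmf_cong refl) simp

lemma two_choices_step_eq_Pi_pmf:
  "two_choices_step n x = Pi_pmf {..<n} 0 (\<lambda>v. collision_or n x (return_pmf (x v)))"
  unfolding two_choices_step_def collision_or_def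
  by (intro Pi_pmf_cong bind_pmf_cong refl) simp

lemma set_pmf_collision_or:
  assumes "n > 0" and "valid_config n k x" and "set_pmf F \<subseteq> {1..k}"
  shows "set_pmf (collision_or n x F) \<subseteq> {1..k}"
  using assms unfolding collision_or_def unif_vertex_def valid_config_def
  by (auto simp: lessThan_empty_iff split: if_splits)

lemma expectation_unif_vertex_bind:
  fixes h :: "'a \<Rightarrow> real"
  assumes "n > 0" and "\<And>w. finite (set_pmf (f w))"
  shows "measure_pmf.expectation (bind_pmf (unif_vertex n) f) h =
         (\<Sum>w<n. measure_pmf.expectation (f w) h) / real n"
  unfolding unif_vertex_def using assms
  by (subst pmf_expectation_bind_pmf_of_set)
    (auto simp: lessThan_empty_iff sum_divide_distrib divide_inverse mult.commute sum_distrib_left)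

lemma finite_bind_pmf_unif:
  assumes "n > 0" and "\<And>w. finite (set_pmf (f w))"
  shows "finite (set_pmf (bind_pmf (unif_vertex n) f))"
  using assms unfolding unif_vertex_def by (auto simp: lessThan_empty_iff)

lemma expectation_map_unif_vertex:
  assumes "n > 0" and "valid_config n k x"
  shows "measure_pmf.expectation (map_pmf x (unif_vertex n)) g = (\<Sum>i\<in>{1..k}. alpha n x i * g i)"
  using expectation_unif_vertex_bind[OF assms(1), of "\<lambda>w. return_pmf (x w)" g]
    sum_vertices_by_opinion[OF assms, of g] assms(1)
  by (simp add: map_pmf_def)

lemma expectation_collision_or:
  assumes n: "n > 0" and x: "valid_config n k x" and F: "finite (set_pmf F)"
  shows "measure_pmf.expectation (collision_or n x F) g =
     (\<Sum>i\<in>{1..k}. (alpha n x i)\<^sup>2 * g i) + (1 - gamma n k x) * measure_pmf.expectation F g"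
proof -
  define A where "A = measure_pmf.expectation F g"
  have fin: "finite (set_pmf (if x w1 = x w2 then return_pmf (x w1) else F))" for w1 w2
    using F by simp
  have inner: "measure_pmf.expectation
        (bind_pmf (unif_vertex n) (\<lambda>w2. if x w1 = x w2 then return_pmf (x w1) else F)) g
      = (\<Sum>w2<n. if x w1 = x w2 then g (x w1) else A) / real n" for w1
    by (subst expectation_unif_vertex_bind[OF n fin]) (auto simp: A_def intro!: sum.cong)
  have "measure_pmf.expectation (collision_or n x F) g =
      (\<Sum>w1<n. (\<Sum>w2<n. if x w1 = x w2 then g (x w1) else A) / real n) / real n"
    unfolding collision_or_def
    by (subst expectation_unif_vertex_bind[OF n finite_bind_pmf_unif[OF n fin]]) (simp add: inner)
  also have "\<dots> = (\<Sum>w1<n. \<Sum>w2<n. (if x w1 = x w2 then g (x w1) - A else 0) + A) / (real n)\<^sup>2"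
    by (simp add: sum_divide_distrib power2_eq_square if_distrib[of "\<lambda>t. t + A"] cong: if_cong)
  also have "\<dots> = (\<Sum>i\<in>{1..k}. (alpha n x i)\<^sup>2 * (g i - A)) + A"
    using n by (simp add: sum.distrib sum_vertex_pairs_by_opinion[OF n x, of "\<lambda>j. g j - A"]
        field_simps power2_eq_square)
  also have "\<dots> = (\<Sum>i\<in>{1..k}. (alpha n x i)\<^sup>2 * g i) + (1 - gamma n k x) * A"
    by (simp add: right_diff_distrib sum_subtractf gamma_def sum_distrib_left algebra_simps)
  finally show ?thesis by (simp add: A_def)
qed

lemma valid_config_Pi_pmf:
  assumes "\<And>v. v < n \<Longrightarrow> set_pmf (X v) \<subseteq> {1..k}" and "y \<in> set_pmf (Pi_pmf {..<n} 0 X)"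
  shows "valid_config n k y"
  using assms unfolding valid_config_def by (force simp: set_Pi_pmf PiE_dflt_def)

lemma finite_set_pmf_Pi_pmf:
  fixes X :: "nat \<Rightarrow> nat pmf"
  assumes "\<And>v. v < n \<Longrightarrow> set_pmf (X v) \<subseteq> {1..k}"
  shows "finite (set_pmf (Pi_pmf {..<n} (0::nat) X))"
proof (subst set_Pi_pmf, simp, rule finite_PiE_dflt)
  fix v assume "v \<in> {..<n}"
  then show "finite ((set_pmf \<circ> X) v)" using finite_subset[OF assms] by auto
qed simp

lemma valid_config_three_majority_step:
  assumes "n > 0" and "valid_config n k x" and "y \<in> set_pmf (three_majority_step n x)"
  shows "valid_config n k y"
proof (rule valid_config_Pi_pmf)
  show "set_pmf (collision_or n x (map_pmf x (unif_vertex n))) \<subseteq> {1..k}"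
    using assms(1,2) by (intro set_pmf_collision_or)
      (auto simp: unif_vertex_def valid_config_def lessThan_empty_iff)
qed (use assms(3) in \<open>simp add: three_majority_step_eq_Pi_pmf\<close>)

lemma valid_config_two_choices_step:
  assumes "n > 0" and "valid_config n k x" and "y \<in> set_pmf (two_choices_step n x)"
  shows "valid_config n k y"
proof (rule valid_config_Pi_pmf)
  show "set_pmf (collision_or n x (return_pmf (x v))) \<subseteq> {1..k}" if "v < n" for v
    using assms(1,2) that by (intro set_pmf_collision_or) (auto simp: valid_config_def)
qed (use assms(3) in \<open>simp add: two_choices_step_eq_Pi_pmf\<close>)

section \<open>Exponential drift of the potential\<close>

lemma exp_le_quadratic:
  fixes z :: real
  assumes "\<bar>z\<bar> \<le> 1"
  shows "exp z \<le> 1 + z + z\<^sup>2"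
proof (cases "z \<ge> 0")
  case True
  then show ?thesis using exp_bound[of z] assms by simp
next
  case False
  define y where "y = - z"
  have y: "y \<ge> 0" using False y_def by simp
  have pos: "0 < 1 + y + y\<^sup>2 / 2" using y by (simp add: add_pos_nonneg)
  have "exp z = 1 / exp y" by (simp add: y_def exp_minus field_simps)
  also have "\<dots> \<le> 1 / (1 + y + y\<^sup>2 / 2)"
    using exp_lower_Taylor_quadratic[OF y] pos by (intro divide_left_mono) auto
  also have "\<dots> \<le> 1 - y + y\<^sup>2 / 2"
  proof -
    have "(1 + y + y\<^sup>2 / 2) * (1 - y + y\<^sup>2 / 2) = 1 + y ^ 4 / 4"
      by (simp add: algebra_simps power2_eq_square power4_eq_xxxx)
    then show ?thesis using pos by (simp add: divide_simps mult.commute)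
  qed
  also have "\<dots> \<le> 1 + z + z\<^sup>2" by (simp add: y_def)
  finally show ?thesis .
qed

lemma expectation_exp_neg_le:
  fixes X :: "'a pmf" and f :: "'a \<Rightarrow> real"
  assumes fin: "finite (set_pmf X)"
    and bnd: "\<And>y. y \<in> set_pmf X \<Longrightarrow> \<bar>\<psi> * (f y - a)\<bar> \<le> 1"
  shows "measure_pmf.expectation X (\<lambda>y. exp (- \<psi> * f y))
     \<le> exp (- \<psi> * measure_pmf.expectation X f + \<psi>\<^sup>2 * measure_pmf.expectation X (\<lambda>y. (f y - a)\<^sup>2))"
proof -
  let ?E = "measure_pmf.expectation X"
  note int = integrable_measure_pmf_finite[OF fin]
  have pw: "exp (- \<psi> * f y) \<le> exp (- \<psi> * a) * (1 - \<psi> * (f y - a) + \<psi>\<^sup>2 * (f y - a)\<^sup>2)"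
    if "y \<in> set_pmf X" for y
  proof -
    have "exp (- (\<psi> * (f y - a))) \<le> 1 - \<psi> * (f y - a) + \<psi>\<^sup>2 * (f y - a)\<^sup>2"
      using exp_le_quadratic[of "- (\<psi> * (f y - a))"] bnd[OF that] by (simp add: power_mult_distrib)
    moreover have "exp (- \<psi> * f y) = exp (- \<psi> * a) * exp (- (\<psi> * (f y - a)))"
      by (simp add: mult_exp_exp algebra_simps)
    ultimately show ?thesis by simp
  qed
  have "?E (\<lambda>y. exp (- \<psi> * f y))
      \<le> ?E (\<lambda>y. exp (- \<psi> * a) * (1 - \<psi> * (f y - a) + \<psi>\<^sup>2 * (f y - a)\<^sup>2))"
    by (intro integral_mono_AE int AE_pmfI pw)
  also have "\<dots> = exp (- \<psi> * a) * (1 + (- \<psi> * (?E f - a) + \<psi>\<^sup>2 * ?E (\<lambda>y. (f y - a)\<^sup>2)))"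
    by (simp add: int algebra_simps)
  also have "\<dots> \<le> exp (- \<psi> * a) * exp (- \<psi> * (?E f - a) + \<psi>\<^sup>2 * ?E (\<lambda>y. (f y - a)\<^sup>2))"
    by (intro mult_left_mono exp_ge_add_one_self) simp
  also have "\<dots> = exp (- \<psi> * ?E f + \<psi>\<^sup>2 * ?E (\<lambda>y. (f y - a)\<^sup>2))"
    by (simp add: mult_exp_exp algebra_simps)
  finally show ?thesis .
qed

text \<open>Cauchy-Schwarz gives \<open>\<langle>\<alpha>(x), \<alpha>(y)\<rangle> \<le> \<surd>\<gamma>(x) \<surd>\<gamma>(y)\<close>, and
  \<open>\<langle>\<alpha>(x), \<alpha>(y)\<rangle>\<close> is an average over the vertices of independent terms.\<close>

lemma exp_neg_sqrt_gamma_le_prod: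
  assumes n: "n > 0" and x: "valid_config n k x" and y: "valid_config n k y" and \<theta>: "0 \<le> \<theta>"
  shows "exp (- \<theta> * sqrt (gamma n k y))
    \<le> (\<Prod>v<n. exp (- (\<theta> / (real n * sqrt (gamma n k x))) * alpha n x (y v)))"
proof -
  define S where "S = sqrt (gamma n k x)"
  have S: "S > 0" using gamma_pos[OF n x] by (simp add: S_def)
  have "\<theta> / (real n * S) * (\<Sum>w<n. alpha n x (y w)) = \<theta> / S * ((\<Sum>w<n. alpha n x (y w)) / real n)"
    by simp
  also have "\<dots> \<le> \<theta> / S * (S * sqrt (gamma n k y))"
    using \<theta> S sum_alpha_le_sqrt_gamma_mult[OF n y, of x]
    by (intro mult_left_mono) (auto simp: S_def)
  also have "\<dots> = \<theta> * sqrt (gamma n k y)" using S by simp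
  finally show ?thesis by (simp add: S_def exp_sum[symmetric] sum_distrib_left sum_negf)
qed

lemma expectation_exp_sqrt_gamma_Pi_pmf_le:
  fixes X :: "nat \<Rightarrow> nat pmf" and a :: "nat \<Rightarrow> real"
  assumes n: "n > 0" and x: "valid_config n k x"
    and sub: "\<And>v. v < n \<Longrightarrow> set_pmf (X v) \<subseteq> {1..k}"
    and \<theta>: "0 \<le> \<theta>" "\<theta> \<le> real n"
    and bnd: "\<And>v y. v < n \<Longrightarrow> y \<in> set_pmf (X v) \<Longrightarrow> \<bar>alpha n x y - a v\<bar> \<le> sqrt (gamma n k x)"
    and mean: "real n * gamma n k x \<le> (\<Sum>v<n. measure_pmf.expectation (X v) (alpha n x))"
    and var: "(\<Sum>v<n. measure_pmf.expectation (X v) (\<lambda>y. (alpha n x y - a v)\<^sup>2)) \<le> V"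
  shows "measure_pmf.expectation (Pi_pmf {..<n} 0 X) (\<lambda>y. exp (- \<theta> * sqrt (gamma n k y)))
     \<le> exp (- \<theta> * sqrt (gamma n k x) + (\<theta> / (real n * sqrt (gamma n k x)))\<^sup>2 * V)"
proof -
  define S where "S = sqrt (gamma n k x)"
  define \<psi> where "\<psi> = \<theta> / (real n * S)"
  let ?P = "Pi_pmf {..<n} (0::nat) X"
  let ?E = "\<lambda>v. measure_pmf.expectation (X v)"
  have S: "S > 0" using gamma_pos[OF n x] by (simp add: S_def)
  have \<psi>: "\<psi> \<ge> 0" using \<theta> S by (simp add: \<psi>_def)
  have finX: "finite (set_pmf (X v))" if "v < n" for v using sub[OF that] finite_subset by blast
  have linearize: "exp (- \<theta> * sqrt (gamma n k y)) \<le> (\<Prod>v<n. exp (- \<psi> * alpha n x (y v)))"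
    if "y \<in> set_pmf ?P" for y
    unfolding \<psi>_def S_def
    by (rule exp_neg_sqrt_gamma_le_prod[OF n x valid_config_Pi_pmf[OF sub that] \<theta>(1)])
  have mgf: "?E v (\<lambda>z. exp (- \<psi> * alpha n x z))
      \<le> exp (- \<psi> * ?E v (alpha n x) + \<psi>\<^sup>2 * ?E v (\<lambda>y. (alpha n x y - a v)\<^sup>2))" if "v < n" for v
  proof (rule expectation_exp_neg_le[OF finX[OF that]])
    fix y assume "y \<in> set_pmf (X v)"
    then have "\<bar>\<psi> * (alpha n x y - a v)\<bar> \<le> \<psi> * S"
      unfolding abs_mult abs_of_nonneg[OF \<psi>] using bnd[OF that] \<psi>
      by (intro mult_left_mono) (auto simp: S_def)
    also have "\<dots> \<le> 1" using \<theta> S n by (simp add: \<psi>_def)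
    finally show "\<bar>\<psi> * (alpha n x y - a v)\<bar> \<le> 1" .
  qed
  have "measure_pmf.expectation ?P (\<lambda>y. exp (- \<theta> * sqrt (gamma n k y)))
      \<le> measure_pmf.expectation ?P (\<lambda>y. \<Prod>v<n. exp (- \<psi> * alpha n x (y v)))"
    by (intro integral_mono_AE integrable_measure_pmf_finite finite_set_pmf_Pi_pmf[OF sub]
        AE_pmfI linearize)
  also have "\<dots> = (\<Prod>v<n. ?E v (\<lambda>z. exp (- \<psi> * alpha n x z)))"
    by (rule expectation_prod_Pi_pmf) (auto intro: integrable_measure_pmf_finite finX)
  also have "\<dots> \<le> (\<Prod>v<n. exp (- \<psi> * ?E v (alpha n x) + \<psi>\<^sup>2 * ?E v (\<lambda>y. (alpha n x y - a v)\<^sup>2)))"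
    by (intro prod_mono conjI integral_nonneg_AE AE_pmfI mgf) auto
  also have "\<dots> = exp (- \<psi> * (\<Sum>v<n. ?E v (alpha n x))
        + \<psi>\<^sup>2 * (\<Sum>v<n. ?E v (\<lambda>y. (alpha n x y - a v)\<^sup>2)))"
    by (simp add: exp_sum[symmetric] sum.distrib sum_distrib_left sum_negf sum_subtractf)
  also have "\<dots> \<le> exp (- \<psi> * (real n * gamma n k x) + \<psi>\<^sup>2 * V)"
    using mean var \<psi> by (intro exp_mono add_mono mult_left_mono_neg mult_left_mono) auto
  also have "- \<psi> * (real n * gamma n k x) = - \<theta> * S"
    using n S gamma_nonneg[of n k x] by (simp add: \<psi>_def S_def field_simps)
  finally show ?thesis by (simp add: \<psi>_def S_def)
qed

lemma sum_expectation_collision_or_alpha_ge: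
  assumes n: "n > 0" and x: "valid_config n k x" and fin: "\<And>v. finite (set_pmf (F v))"
    and mean: "(\<Sum>v<n. measure_pmf.expectation (F v) (alpha n x)) = real n * gamma n k x"
  shows "real n * gamma n k x
    \<le> (\<Sum>v<n. measure_pmf.expectation (collision_or n x (F v)) (alpha n x))"
proof -
  let ?g = "gamma n k x"
  have "(\<Sum>v<n. measure_pmf.expectation (collision_or n x (F v)) (alpha n x))
      = real n * (\<Sum>i\<in>{1..k}. alpha n x i ^ 3) + (1 - ?g) * (real n * ?g)"
    by (simp add: expectation_collision_or[OF n x fin] sum.distrib mean power2_eq_square
        power3_eq_cube flip: sum_distrib_left)
  also have "\<dots> \<ge> real n * ?g\<^sup>2 + (1 - ?g) * (real n * ?g)"
    using gamma_sq_le_sum_alpha_cube[OF n x] by (intro add_right_mono mult_left_mono) auto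
  finally show ?thesis by (simp add: power2_eq_square algebra_simps)
qed

lemma sum_alpha_sq_mult_le:
  assumes "\<And>i. i \<in> {1..k} \<Longrightarrow> h i \<le> B"
  shows "(\<Sum>i\<in>{1..k}. (alpha n x i)\<^sup>2 * h i) \<le> B * gamma n k x"
  unfolding gamma_def sum_distrib_left using assms
  by (intro sum_mono) (metis mult.commute mult_left_mono zero_le_power2)

lemma three_majority_exp_drift:
  assumes n: "n > 0" and x: "valid_config n k x" and \<theta>: "0 \<le> \<theta>" "\<theta> \<le> real n"
  shows "measure_pmf.expectation (three_majority_step n x) (\<lambda>y. exp (- \<theta> * sqrt (gamma n k y)))
     \<le> exp (- \<theta> * sqrt (gamma n k x) + \<theta>\<^sup>2 * (2 * sqrt (gamma n k x) / real n))"
proof -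
  define S where "S = sqrt (gamma n k x)"
  define F where "F = map_pmf x (unif_vertex n)"
  let ?X = "collision_or n x F"
  have S: "S > 0" using gamma_pos[OF n x] by (simp add: S_def)
  have \<gamma>: "0 \<le> gamma n k x" "gamma n k x \<le> 1" "gamma n k x = S\<^sup>2"
    using gamma_nonneg gamma_le_1[OF n x] by (auto simp: S_def)
  have F: "set_pmf F \<subseteq> {1..k}" "finite (set_pmf F)"
    using x n by (auto simp: F_def unif_vertex_def valid_config_def lessThan_empty_iff)
  have EF: "measure_pmf.expectation F g = (\<Sum>i\<in>{1..k}. alpha n x i * g i)" for g
    unfolding F_def by (rule expectation_map_unif_vertex[OF n x])
  have X: "set_pmf ?X \<subseteq> {1..k}" by (rule set_pmf_collision_or[OF n x F(1)])
  have small: "alpha n x i \<le> S" "(alpha n x i)\<^sup>2 \<le> S" if "i \<in> {1..k}" for i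
  proof -
    show "alpha n x i \<le> S" using alpha_le_sqrt_gamma[OF that] by (simp add: S_def)
    moreover have "(alpha n x i)\<^sup>2 \<le> alpha n x i"
      using alpha_nonneg alpha_le_1 by (simp add: power2_eq_square mult_left_le)
    ultimately show "(alpha n x i)\<^sup>2 \<le> S" by linarith
  qed
  have var: "measure_pmf.expectation ?X (\<lambda>y. (alpha n x y - 0)\<^sup>2) \<le> 2 * S * gamma n k x"
  proof -
    have "measure_pmf.expectation ?X (\<lambda>y. (alpha n x y - 0)\<^sup>2)
        = (\<Sum>i\<in>{1..k}. (alpha n x i)\<^sup>2 * (alpha n x i)\<^sup>2)
          + (1 - gamma n k x) * (\<Sum>i\<in>{1..k}. (alpha n x i)\<^sup>2 * alpha n x i)"
      by (simp add: expectation_collision_or[OF n x F(2)] EF mult.commute)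
    also have "\<dots> \<le> S * gamma n k x + (1 - gamma n k x) * (S * gamma n k x)"
      using \<gamma> small by (intro add_mono mult_left_mono sum_alpha_sq_mult_le) auto
    also have "\<dots> \<le> 2 * S * gamma n k x"
      using \<gamma> S by (simp add: algebra_simps mult_left_le)
    finally show ?thesis .
  qed
  have "measure_pmf.expectation (Pi_pmf {..<n} 0 (\<lambda>_. ?X)) (\<lambda>y. exp (- \<theta> * sqrt (gamma n k y)))
     \<le> exp (- \<theta> * S + (\<theta> / (real n * S))\<^sup>2 * (real n * (2 * S * gamma n k x)))"
    unfolding S_def
  proof (rule expectation_exp_sqrt_gamma_Pi_pmf_le[OF n x X \<theta>, where a = "\<lambda>_. 0"])
    show "\<bar>alpha n x y - 0\<bar> \<le> sqrt (gamma n k x)" if "y \<in> set_pmf ?X" for y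
      using alpha_le_sqrt_gamma X that by (auto simp: alpha_nonneg)
    show "real n * gamma n k x \<le> (\<Sum>v<n. measure_pmf.expectation ?X (alpha n x))"
      using sum_expectation_collision_or_alpha_ge[OF n x F(2)]
      by (simp add: EF gamma_def power2_eq_square)
    show "(\<Sum>v<n. measure_pmf.expectation ?X (\<lambda>y. (alpha n x y - 0)\<^sup>2))
        \<le> real n * (2 * sqrt (gamma n k x) * gamma n k x)"
      using var by (simp add: S_def mult_left_mono)
  qed
  also have "(\<theta> / (real n * S))\<^sup>2 * (real n * (2 * S * gamma n k x)) = \<theta>\<^sup>2 * (2 * S / real n)"
    using n S \<gamma>(3) by (simp add: power2_eq_square field_simps)
  finally show ?thesis by (simp add: three_majority_step_eq_Pi_pmf F_def S_def)
qed

lemma two_choices_exp_drift: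
  assumes n: "n > 0" and x: "valid_config n k x" and \<theta>: "0 \<le> \<theta>" "\<theta> \<le> real n"
  shows "measure_pmf.expectation (two_choices_step n x) (\<lambda>y. exp (- \<theta> * sqrt (gamma n k y)))
     \<le> exp (- \<theta> * sqrt (gamma n k x) + \<theta>\<^sup>2 * (gamma n k x / real n))"
proof -
  define S where "S = sqrt (gamma n k x)"
  let ?X = "\<lambda>v. collision_or n x (return_pmf (x v))"
  have S: "S > 0" using gamma_pos[OF n x] by (simp add: S_def)
  have \<gamma>: "gamma n k x = S\<^sup>2" using gamma_nonneg by (simp add: S_def)
  have xv: "x v \<in> {1..k}" if "v < n" for v using x that unfolding valid_config_def by blast
  have X: "set_pmf (?X v) \<subseteq> {1..k}" if "v < n" for v
    using set_pmf_collision_or[OF n x] xv[OF that] by simp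
  have dist: "\<bar>alpha n x i - alpha n x j\<bar> \<le> S" if "i \<in> {1..k}" "j \<in> {1..k}" for i j
    using alpha_le_sqrt_gamma[OF that(1), of n x] alpha_le_sqrt_gamma[OF that(2), of n x]
      alpha_nonneg[of n x i] alpha_nonneg[of n x j] by (simp add: S_def abs_le_iff)
  have var: "measure_pmf.expectation (?X v) (\<lambda>y. (alpha n x y - alpha n x (x v))\<^sup>2)
      \<le> (gamma n k x)\<^sup>2"
    if "v < n" for v
  proof -
    have "measure_pmf.expectation (?X v) (\<lambda>y. (alpha n x y - alpha n x (x v))\<^sup>2)
        = (\<Sum>i\<in>{1..k}. (alpha n x i)\<^sup>2 * (alpha n x i - alpha n x (x v))\<^sup>2)"
      by (simp add: expectation_collision_or[OF n x])
    also have "\<dots> \<le> gamma n k x * gamma n k x"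
    proof (rule sum_alpha_sq_mult_le)
      fix i assume "i \<in> {1..k}"
      then show "(alpha n x i - alpha n x (x v))\<^sup>2 \<le> gamma n k x"
        unfolding \<gamma> using dist[OF _ xv[OF that]] abs_le_square_iff[of _ S] S by simp
    qed
    finally show ?thesis by (simp add: power2_eq_square)
  qed
  have "measure_pmf.expectation (Pi_pmf {..<n} 0 ?X) (\<lambda>y. exp (- \<theta> * sqrt (gamma n k y)))
     \<le> exp (- \<theta> * S + (\<theta> / (real n * S))\<^sup>2 * (real n * (gamma n k x)\<^sup>2))"
    unfolding S_def
  proof (rule expectation_exp_sqrt_gamma_Pi_pmf_le[OF n x X \<theta>, where a = "\<lambda>v. alpha n x (x v)"])
    show "\<bar>alpha n x y - alpha n x (x v)\<bar> \<le> sqrt (gamma n k x)"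
      if "v < n" "y \<in> set_pmf (?X v)" for v y
      using dist[OF subsetD[OF X[OF that(1)] that(2)] xv[OF that(1)]] by (simp add: S_def)
    show "real n * gamma n k x \<le> (\<Sum>v<n. measure_pmf.expectation (?X v) (alpha n x))"
      using sum_expectation_collision_or_alpha_ge[OF n x, of "\<lambda>v. return_pmf (x v)"]
        sum_vertices_by_opinion[OF n x, of "alpha n x"]
      by (simp add: gamma_def power2_eq_square)
    show "(\<Sum>v<n. measure_pmf.expectation (?X v) (\<lambda>y. (alpha n x y - alpha n x (x v))\<^sup>2))
        \<le> real n * (gamma n k x)\<^sup>2"
      using sum_mono[of "{..<n}", OF var] by simp
  qed
  also have "(\<theta> / (real n * S))\<^sup>2 * (real n * (gamma n k x)\<^sup>2) = \<theta>\<^sup>2 * (gamma n k x / real n)"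
    using n S \<gamma> by (simp add: power2_eq_square field_simps)
  finally show ?thesis by (simp add: two_choices_step_eq_Pi_pmf S_def)
qed

lemma length_trajectory: "xs \<in> set_pmf (trajectory K x0 t) \<Longrightarrow> length xs = Suc t"
  by (induction t arbitrary: xs) auto

lemma last_trajectory: "xs \<in> set_pmf (trajectory K x0 t) \<Longrightarrow> last xs = xs ! t"
  using length_trajectory last_conv_nth by (metis Zero_not_Suc diff_Suc_1 list.size(3))

lemma nth_0_trajectory: "xs \<in> set_pmf (trajectory K x0 t) \<Longrightarrow> xs ! 0 = x0"
proof (induction t arbitrary: xs)
  case (Suc t)
  then obtain ys y where ys: "ys \<in> set_pmf (trajectory K x0 t)" and "xs = ys @ [y]" by auto
  then show ?case using Suc.IH[OF ys] length_trajectory[OF ys] by (simp add: nth_append)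
qed auto

lemma trajectory_invariant:
  assumes "P x0" and P: "\<And>x y. P x \<Longrightarrow> y \<in> set_pmf (K x) \<Longrightarrow> P y"
  shows "xs \<in> set_pmf (trajectory K x0 t) \<Longrightarrow> i \<le> t \<Longrightarrow> P (xs ! i)"
proof (induction t arbitrary: xs i)
  case 0
  then show ?case using assms(1) by auto
next
  case (Suc t)
  then obtain ys y where ys: "ys \<in> set_pmf (trajectory K x0 t)" and y: "y \<in> set_pmf (K (last ys))"
    and xs: "xs = ys @ [y]" by auto
  have "P (last ys)" using Suc.IH[OF ys, of t] last_trajectory[OF ys] by simp
  then have "P y" using P y by blast
  then show ?case
    using Suc.IH[OF ys] Suc.prems(2) length_trajectory[OF ys] xs
    by (cases "i \<le> t") (auto simp: nth_append)
qed

lemma map_take_trajectory: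
  "map_pmf (take (Suc t)) (trajectory K x0 (t + m)) = trajectory K x0 t"
proof (induction m)
  case 0
  have "map_pmf (take (Suc t)) (trajectory K x0 t) = map_pmf id (trajectory K x0 t)"
    by (intro map_pmf_cong refl) (simp add: length_trajectory)
  then show ?case by simp
next
  case (Suc m)
  have "map_pmf (take (Suc t)) (trajectory K x0 (t + Suc m))
      = bind_pmf (trajectory K x0 (t + m)) (\<lambda>xs. return_pmf (take (Suc t) xs))"
    by (auto simp: map_bind_pmf map_pmf_comp length_trajectory map_pmf_const
        intro!: bind_pmf_cong)
  then show ?case using Suc.IH by (simp add: map_pmf_def)
qed

lemma expectation_trajectory_Suc_le:
  fixes f g :: "config list \<Rightarrow> real"
  assumes f: "\<And>xs. \<bar>f xs\<bar> \<le> B" and g: "\<And>xs. \<bar>g xs\<bar> \<le> B'"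
    and step: "\<And>xs. xs \<in> set_pmf (trajectory K x0 t) \<Longrightarrow>
      measure_pmf.expectation (K (last xs)) (\<lambda>y. f (xs @ [y])) \<le> g xs"
  shows "measure_pmf.expectation (trajectory K x0 (Suc t)) f
    \<le> measure_pmf.expectation (trajectory K x0 t) g"
proof -
  have bounded: "integrable (measure_pmf M) h" if "\<And>x. \<bar>h x\<bar> \<le> C" for M C and h :: "'a \<Rightarrow> real"
    by (rule measure_pmf.integrable_const_bound[where B = C]) (use that in auto)
  have inner: "\<bar>measure_pmf.expectation (K (last xs)) (\<lambda>y. f (xs @ [y]))\<bar> \<le> B" for xs
  proof -
    have "\<bar>measure_pmf.expectation (K (last xs)) (\<lambda>y. f (xs @ [y]))\<bar>
        \<le> measure_pmf.expectation (K (last xs)) (\<lambda>y. \<bar>f (xs @ [y])\<bar>)"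
      using integral_norm_bound[of "K (last xs)" "\<lambda>y. f (xs @ [y])"] by simp
    also have "\<dots> \<le> B"
      by (intro measure_pmf.integral_le_const bounded AE_pmfI) (use f in auto)
    finally show ?thesis .
  qed
  have "measure_pmf.expectation (trajectory K x0 (Suc t)) f = measure_pmf.expectation
      (trajectory K x0 t) (\<lambda>xs. measure_pmf.expectation (map_pmf (\<lambda>y. xs @ [y]) (K (last xs))) f)"
    unfolding trajectory.simps measure_pmf_bind
    by (rule integral_bind[where K = "count_space UNIV" and B = B and B' = 1])
      (auto intro!: measure_pmf_in_subprob_algebra simp: f)
  also have "\<dots> = measure_pmf.expectation (trajectory K x0 t)
      (\<lambda>xs. measure_pmf.expectation (K (last xs)) (\<lambda>y. f (xs @ [y])))"
    by simp
  also have "\<dots> \<le> measure_pmf.expectation (trajectory K x0 t) g"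
    by (intro integral_mono_AE AE_pmfI step bounded[OF inner] bounded[OF g])
  finally show ?thesis .
qed

section \<open>Reaching a low level against an exponential drift\<close>

locale potential_drift =
  fixes K :: "config \<Rightarrow> config pmf" and P :: "config \<Rightarrow> bool" and S :: "config \<Rightarrow> real"
    and \<theta> s0 L Q :: real
  assumes S_nonneg: "0 \<le> S x"
    and \<theta>_nonneg: "0 \<le> \<theta>"
    and L_nonneg: "0 \<le> L"
    and Q_nonneg: "0 \<le> Q"
    and K_preserves: "P x \<Longrightarrow> y \<in> set_pmf (K x) \<Longrightarrow> P y"
    and drift_above: "P x \<Longrightarrow> s0 \<le> S x \<Longrightarrow>
      measure_pmf.expectation (K x) (\<lambda>y. exp (- \<theta> * S y)) \<le> L"
    and drift_below: "P x \<Longrightarrow> S x < s0 \<Longrightarrow>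
      measure_pmf.expectation (K x) (\<lambda>y. exp (- \<theta> * S y)) \<le> exp (- \<theta> * S x + Q)"
begin

definition excursion :: "real \<Rightarrow> nat \<Rightarrow> nat \<Rightarrow> config list set" where
  "excursion s1 \<rho> \<tau> =
     {xs. s0 \<le> S (xs ! \<rho>) \<and> (\<forall>s\<in>{\<rho><..<\<tau>}. S (xs ! s) < s0) \<and> S (xs ! \<tau>) \<le> s1}"

text \<open>While the potential stays below \<open>s0\<close> after time \<open>\<rho>\<close>, each round multiplies
  the expected weight by at most \<open>exp Q\<close> (\<open>drift_below\<close>); the first round after \<open>\<rho>\<close>
  is charged \<open>L\<close> (\<open>drift_above\<close>).\<close>

definition excursion_weight :: "nat \<Rightarrow> nat \<Rightarrow> config list \<Rightarrow> real" where
  "excursion_weight \<rho> m xs =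
     (if s0 \<le> S (xs ! \<rho>) \<and> (\<forall>s\<in>{\<rho><..<\<rho> + m}. S (xs ! s) < s0)
      then exp (- \<theta> * S (xs ! (\<rho> + m))) else 0)"

lemma abs_exp_neg_potential_le_1: "\<bar>exp (- \<theta> * S x)\<bar> \<le> 1"
  using mult_nonneg_nonneg[OF \<theta>_nonneg S_nonneg] by simp

lemma abs_excursion_weight_le_1: "\<bar>excursion_weight \<rho> m xs\<bar> \<le> 1"
  unfolding excursion_weight_def using abs_exp_neg_potential_le_1 by simp

lemma excursion_weight_append:
  assumes "length xs = Suc (\<rho> + m)"
  shows "excursion_weight \<rho> (Suc m) (xs @ [y]) =
    (if s0 \<le> S (xs ! \<rho>) \<and> (\<forall>s\<in>{\<rho><..\<rho> + m}. S (xs ! s) < s0) then exp (- \<theta> * S y) else 0)"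
proof -
  have "{\<rho><..<\<rho> + Suc m} = {\<rho><..\<rho> + m}" by auto
  then show ?thesis using assms by (auto simp: excursion_weight_def nth_append)
qed

lemma expectation_excursion_weight_first:
  assumes "P x0" and xs: "xs \<in> set_pmf (trajectory K x0 \<rho>)"
  shows "measure_pmf.expectation (K (last xs)) (\<lambda>y. excursion_weight \<rho> (Suc 0) (xs @ [y])) \<le> L"
proof -
  have "P (last xs)"
    using trajectory_invariant[where P = P, OF assms(1) K_preserves xs] last_trajectory[OF xs]
    by simp
  then show ?thesis
    using drift_above L_nonneg length_trajectory[OF xs] last_trajectory[OF xs]
    by (cases "s0 \<le> S (xs ! \<rho>)") (simp_all add: excursion_weight_append)
qed

lemma expectation_excursion_weight_next:
  assumes "P x0" and "0 < m" and xs: "xs \<in> set_pmf (trajectory K x0 (\<rho> + m))"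
  shows "measure_pmf.expectation (K (last xs)) (\<lambda>y. excursion_weight \<rho> (Suc m) (xs @ [y]))
    \<le> exp Q * excursion_weight \<rho> m xs"
proof -
  have last: "last xs = xs ! (\<rho> + m)" by (rule last_trajectory[OF xs])
  have P: "P (last xs)"
    using trajectory_invariant[where P = P, OF assms(1) K_preserves xs] last by simp
  define C where "C \<longleftrightarrow> s0 \<le> S (xs ! \<rho>) \<and> (\<forall>s\<in>{\<rho><..\<rho> + m}. S (xs ! s) < s0)"
  have w: "excursion_weight \<rho> (Suc m) (xs @ [y]) = (if C then exp (- \<theta> * S y) else 0)" for y
    unfolding C_def by (rule excursion_weight_append[OF length_trajectory[OF xs]])
  show ?thesis
  proof (cases C)
    case True
    moreover have "{\<rho><..\<rho> + m} = insert (\<rho> + m) {\<rho><..<\<rho> + m}" using \<open>0 < m\<close> by auto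
    ultimately have "S (last xs) < s0" and "excursion_weight \<rho> m xs = exp (- \<theta> * S (last xs))"
      by (auto simp: C_def excursion_weight_def last)
    with drift_below[OF P] True show ?thesis by (simp add: w mult_exp_exp add.commute)
  qed (simp add: w, simp add: excursion_weight_def)
qed

lemma expectation_excursion_weight_le:
  assumes "P x0"
  shows "measure_pmf.expectation (trajectory K x0 (\<rho> + Suc j)) (excursion_weight \<rho> (Suc j))
    \<le> L * exp (real j * Q)"
proof (induction j)
  case 0
  have "measure_pmf.expectation (trajectory K x0 (Suc \<rho>)) (excursion_weight \<rho> (Suc 0))
      \<le> measure_pmf.expectation (trajectory K x0 \<rho>) (\<lambda>_. L)"
    by (rule expectation_trajectory_Suc_le[OF abs_excursion_weight_le_1, where B' = L])
      (use L_nonneg expectation_excursion_weight_first[OF assms] in auto)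
  then show ?case by simp
next
  case (Suc j)
  have "measure_pmf.expectation (trajectory K x0 (Suc (\<rho> + Suc j)))
        (excursion_weight \<rho> (Suc (Suc j)))
      \<le> measure_pmf.expectation (trajectory K x0 (\<rho> + Suc j))
        (\<lambda>xs. exp Q * excursion_weight \<rho> (Suc j) xs)"
  proof (rule expectation_trajectory_Suc_le[OF abs_excursion_weight_le_1])
    show "\<bar>exp Q * excursion_weight \<rho> (Suc j) xs\<bar> \<le> exp Q" for xs
      using abs_excursion_weight_le_1[of \<rho> "Suc j" xs] by (simp add: abs_mult)
  qed (rule expectation_excursion_weight_next[OF assms zero_less_Suc])
  also have "\<dots> \<le> exp Q * (L * exp (real j * Q))"
    using Suc.IH by simp
  finally show ?case by (simp add: mult_exp_exp algebra_simps)
qed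

lemma prob_excursion_le:
  assumes "P x0" and "\<rho> < \<tau>" and "\<tau> \<le> T"
  shows "measure_pmf.prob (trajectory K x0 T) (excursion s1 \<rho> \<tau>)
    \<le> exp (\<theta> * s1) * L * exp (real T * Q)"
proof -
  obtain j where j: "\<tau> = \<rho> + Suc j" using \<open>\<rho> < \<tau>\<close> less_iff_Suc_add by auto
  have "take (Suc \<tau>) -` excursion s1 \<rho> \<tau> = excursion s1 \<rho> \<tau>"
    using \<open>\<rho> < \<tau>\<close> by (auto simp: excursion_def)
  then have "measure_pmf.prob (trajectory K x0 T) (excursion s1 \<rho> \<tau>)
      = measure_pmf.prob (map_pmf (take (Suc \<tau>)) (trajectory K x0 (\<tau> + (T - \<tau>))))
          (excursion s1 \<rho> \<tau>)"
    using assms by simp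
  also have "\<dots> = measure_pmf.expectation (trajectory K x0 \<tau>) (indicator (excursion s1 \<rho> \<tau>))"
    by (simp only: map_take_trajectory) simp
  also have "\<dots> \<le> measure_pmf.expectation (trajectory K x0 \<tau>)
      (\<lambda>xs. exp (\<theta> * s1) * excursion_weight \<rho> (Suc j) xs)"
  proof (rule integral_mono)
    fix xs
    have "1 \<le> exp (\<theta> * s1) * exp (- \<theta> * S (xs ! \<tau>))" if "S (xs ! \<tau>) \<le> s1"
      using mult_left_mono[OF that \<theta>_nonneg] by (simp add: mult_exp_exp algebra_simps)
    then show "indicator (excursion s1 \<rho> \<tau>) xs \<le> exp (\<theta> * s1) * excursion_weight \<rho> (Suc j) xs"
      using j by (auto simp: excursion_def excursion_weight_def indicator_def)
  qed (auto intro!: measure_pmf.integrable_const_bound[where B = 1] abs_excursion_weight_le_1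
         integrable_mult_right)
  also have "\<dots> \<le> exp (\<theta> * s1) * (L * exp (real j * Q))"
    using expectation_excursion_weight_le[OF assms(1), of \<rho> j] j by simp
  also have "\<dots> \<le> exp (\<theta> * s1) * L * exp (real T * Q)"
    using j assms(3) L_nonneg Q_nonneg by (auto intro!: mult_left_mono mult_right_mono)
  finally show ?thesis .
qed

lemma hit_imp_excursion:
  assumes "s0 \<le> S (xs ! 0)" and "s1 < s0" and "t \<le> T" and "S (xs ! t) \<le> s1"
  shows "\<exists>\<tau>\<in>{1..T}. \<exists>\<rho><\<tau>. xs \<in> excursion s1 \<rho> \<tau>"
proof -
  define above where "above r \<longleftrightarrow> r < t \<and> s0 \<le> S (xs ! r)" for r
  have "t \<noteq> 0"
  proof
    assume "t = 0"
    with assms show False by simp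
  qed
  then have "above 0" using assms(1) by (simp add: above_def)
  define \<rho> where "\<rho> = Greatest above"
  have "above \<rho>"
    unfolding \<rho>_def by (rule GreatestI_nat[where P = above and b = t, OF \<open>above 0\<close>]) (simp add: above_def)
  moreover have "s \<le> \<rho>" if "above s" for s
    unfolding \<rho>_def using that by (intro Greatest_le_nat[where b = t]) (auto simp: above_def)
  ultimately have "xs \<in> excursion s1 \<rho> t"
    using assms(4) by (force simp: excursion_def above_def)
  then show ?thesis using \<open>above \<rho>\<close> \<open>t \<noteq> 0\<close> assms(3) by (auto simp: above_def)
qed

text \<open>Union bound over the \<open>T\<^sup>2\<close> possible last exits from above \<open>s0\<close>.\<close>

lemma prob_hit_le:
  assumes "P x0" and "s0 \<le> S x0" and "s1 < s0"
  shows "measure_pmf.prob (trajectory K x0 T) {xs. \<exists>t\<le>T. S (xs ! t) \<le> s1}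
     \<le> real T * real T * (exp (\<theta> * s1) * L * exp (real T * Q))"
proof -
  let ?M = "trajectory K x0 T"
  let ?c = "exp (\<theta> * s1) * L * exp (real T * Q)"
  have "{xs. \<exists>t\<le>T. S (xs ! t) \<le> s1} \<inter> set_pmf ?M \<subseteq> (\<Union>\<tau>\<in>{1..T}. \<Union>\<rho>\<in>{..<\<tau>}. excursion s1 \<rho> \<tau>)"
    using hit_imp_excursion assms(2,3) nth_0_trajectory by fastforce
  then have "measure_pmf.prob ?M {xs. \<exists>t\<le>T. S (xs ! t) \<le> s1}
      \<le> measure_pmf.prob ?M (\<Union>\<tau>\<in>{1..T}. \<Union>\<rho>\<in>{..<\<tau>}. excursion s1 \<rho> \<tau>)"
    by (subst measure_Int_set_pmf[symmetric]) (intro measure_pmf.finite_measure_mono; simp)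
  also have "\<dots> \<le> (\<Sum>\<tau>\<in>{1..T}. \<Sum>\<rho><\<tau>. measure_pmf.prob ?M (excursion s1 \<rho> \<tau>))"
    by (intro order_trans[OF measure_UNION_le] sum_mono measure_UNION_le) auto
  also have "\<dots> \<le> (\<Sum>\<tau>\<in>{1..T}. \<Sum>\<rho><\<tau>. ?c)"
    by (intro sum_mono prob_excursion_le[OF assms(1)]) auto
  also have "\<dots> \<le> (\<Sum>\<tau>\<in>{1..T}. real T * ?c)"
    using L_nonneg by (intro sum_mono) (auto intro!: mult_right_mono)
  finally show ?thesis by simp
qed

end

lemma prob_potential_drop_le:
  fixes K :: "config \<Rightarrow> config pmf" and S q :: "config \<Rightarrow> real"
  assumes S_nonneg: "\<And>x. 0 \<le> S x" and \<theta>: "0 \<le> \<theta>" and \<delta>: "0 < \<delta>" "\<delta> \<le> 1"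
    and x0: "P x0" "0 < S x0" "0 \<le> q x0"
    and K_preserves: "\<And>x y. P x \<Longrightarrow> y \<in> set_pmf (K x) \<Longrightarrow> P y"
    and drift: "\<And>x. P x \<Longrightarrow>
      measure_pmf.expectation (K x) (\<lambda>y. exp (- \<theta> * S y)) \<le> exp (- \<theta> * S x + \<theta>\<^sup>2 * q x)"
    and small: "\<And>x. P x \<Longrightarrow> \<theta> * q x \<le> \<delta> * S x"
    and mono: "\<And>x. P x \<Longrightarrow> S x < S x0 \<Longrightarrow> q x \<le> q x0"
  shows "measure_pmf.prob (trajectory K x0 T) {xs. \<exists>t\<le>T. S (xs ! t) \<le> (1 - 2 * \<delta>) * S x0}
    \<le> real T * real T * exp (- \<theta> * \<delta> * S x0 + real T * \<theta>\<^sup>2 * q x0)"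
proof -
  interpret potential_drift K P S \<theta> "S x0" "exp (- \<theta> * ((1 - \<delta>) * S x0))" "\<theta>\<^sup>2 * q x0"
  proof
    fix x assume x: "P x"
    have noise: "\<theta>\<^sup>2 * q x \<le> \<theta> * (\<delta> * S x)"
      using mult_left_mono[OF small[OF x] \<theta>] by (simp add: power2_eq_square algebra_simps)
    show "measure_pmf.expectation (K x) (\<lambda>y. exp (- \<theta> * S y)) \<le> exp (- \<theta> * ((1 - \<delta>) * S x0))"
      if "S x0 \<le> S x"
    proof -
      have "\<theta> * ((1 - \<delta>) * S x0) \<le> \<theta> * ((1 - \<delta>) * S x)"
        using that \<theta> \<delta> by (intro mult_left_mono) auto
      with noise have "- \<theta> * S x + \<theta>\<^sup>2 * q x \<le> - \<theta> * ((1 - \<delta>) * S x0)"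
        by (simp add: algebra_simps)
      then show ?thesis using drift[OF x] by (meson exp_le_cancel_iff order_trans)
    qed
    show "measure_pmf.expectation (K x) (\<lambda>y. exp (- \<theta> * S y)) \<le> exp (- \<theta> * S x + \<theta>\<^sup>2 * q x0)"
      if "S x < S x0"
    proof -
      have "\<theta>\<^sup>2 * q x \<le> \<theta>\<^sup>2 * q x0" using mono[OF x that] by (intro mult_left_mono) auto
      then show ?thesis using drift[OF x] by (meson add_left_mono exp_le_cancel_iff order_trans)
    qed
  qed (use S_nonneg \<theta> x0 K_preserves in auto)
  have "measure_pmf.prob (trajectory K x0 T) {xs. \<exists>t\<le>T. S (xs ! t) \<le> (1 - 2 * \<delta>) * S x0}
    \<le> real T * real T * (exp (\<theta> * ((1 - 2 * \<delta>) * S x0)) * exp (- \<theta> * ((1 - \<delta>) * S x0))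
        * exp (real T * (\<theta>\<^sup>2 * q x0)))"
    using prob_hit_le[OF x0(1)] \<delta> x0 by simp
  also have "exp (\<theta> * ((1 - 2 * \<delta>) * S x0)) * exp (- \<theta> * ((1 - \<delta>) * S x0))
        * exp (real T * (\<theta>\<^sup>2 * q x0)) = exp (- \<theta> * \<delta> * S x0 + real T * \<theta>\<^sup>2 * q x0)"
    by (simp add: mult_exp_exp algebra_simps)
  finally show ?thesis .
qed

section \<open>Tail bounds for the stopping time\<close>

lemma le_of_le_square_le_one:
  fixes p u :: real
  assumes "p \<le> u\<^sup>2" and "p \<le> 1" and "0 \<le> u"
  shows "p \<le> u"
proof (cases "u \<le> 1")
  case True
  then have "u\<^sup>2 \<le> u" using assms(3) by (simp add: power2_eq_square mult_left_le)
  with assms show ?thesis by linarith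
qed (use assms in linarith)

lemma prob_tau_le_of_exp_drift:
  fixes K :: "config \<Rightarrow> config pmf" and q :: "config \<Rightarrow> real"
  assumes c: "0 < c" "c < 1" and \<delta>_def: "\<delta> = (1 - sqrt (1 - c)) / 2"
    and n: "n > 0" and x0: "valid_config n k x0" and q0: "0 \<le> q x0"
    and K_preserves: "\<And>x y. valid_config n k x \<Longrightarrow> y \<in> set_pmf (K x) \<Longrightarrow> valid_config n k y"
    and \<theta>: "0 \<le> \<theta>"
    and drift: "\<And>x. valid_config n k x \<Longrightarrow>
      measure_pmf.expectation (K x) (\<lambda>y. exp (- \<theta> * sqrt (gamma n k y)))
        \<le> exp (- \<theta> * sqrt (gamma n k x) + \<theta>\<^sup>2 * q x)"
    and small: "\<And>x. valid_config n k x \<Longrightarrow> \<theta> * q x \<le> \<delta> * sqrt (gamma n k x)"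
    and mono: "\<And>x. valid_config n k x \<Longrightarrow> gamma n k x < gamma n k x0 \<Longrightarrow> q x \<le> q x0"
    and X: "- \<theta> * \<delta> * sqrt (gamma n k x0) + real T * \<theta>\<^sup>2 * q x0 \<le> - 2 * X"
  shows "prob_tau_le K n k c x0 T \<le> real T * exp (- X)"
proof -
  have \<delta>: "0 < \<delta>" "\<delta> \<le> 1" "1 - 2 * \<delta> = sqrt (1 - c)"
    using c real_sqrt_ge_zero[of "1 - c"] by (auto simp: \<delta>_def field_simps)
  have "prob_tau_le K n k c x0 T
      = measure_pmf.prob (trajectory K x0 T)
          {xs. \<exists>t\<le>T. sqrt (gamma n k (xs ! t)) \<le> (1 - 2 * \<delta>) * sqrt (gamma n k x0)}"
    unfolding prob_tau_le_def \<delta>(3) by (simp add: real_sqrt_mult[symmetric])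
  also have "\<dots> \<le> real T * real T * exp (- \<theta> * \<delta> * sqrt (gamma n k x0) + real T * \<theta>\<^sup>2 * q x0)"
    by (rule prob_potential_drop_le[where P = "valid_config n k"])
      (use \<theta> \<delta> x0 gamma_pos[OF n x0] gamma_nonneg q0 K_preserves drift small mono in auto)
  also have "\<dots> \<le> real T * real T * exp (- 2 * X)"
    by (rule mult_left_mono) (use X in simp_all)
  also have "\<dots> = (real T * exp (- X))\<^sup>2"
    by (simp add: power2_eq_square mult_exp_exp)
  finally show ?thesis
    by (rule le_of_le_square_le_one) (simp_all add: prob_tau_le_def)
qed

lemma three_majority_prob_tau_le:
  assumes c: "0 < c" "c < 1" and n: "n > 0" and x0: "valid_config n k x0" and T: "T > 0"
  shows "prob_tau_le (three_majority_step n) n k c x0 T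
     \<le> real T * exp (- (((1 - sqrt (1 - c)) / 2)\<^sup>2 / 32) * (real n * sqrt (gamma n k x0) / real T))"
proof -
  define \<delta> where "\<delta> = (1 - sqrt (1 - c)) / 2"
  define \<theta> where "\<theta> = \<delta> * real n / (8 * real T)"
  define S0 where "S0 = sqrt (gamma n k x0)"
  have \<delta>: "0 < \<delta>" "\<delta> \<le> 1/2" using c by (auto simp: \<delta>_def)
  have S0: "0 < S0" using gamma_pos[OF n x0] by (simp add: S0_def)
  have \<theta>: "0 \<le> \<theta>" "\<theta> \<le> real n" "2 * \<theta> / real n \<le> \<delta>"
    using \<delta> n T by (auto simp: \<theta>_def field_simps)
  define aY where "aY = \<delta>\<^sup>2 / 32 * (real n * S0 / real T)"
  have "- \<theta> * \<delta> * S0 + real T * \<theta>\<^sup>2 * (2 * S0 / real n) = - 3 * aY"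
    using n T by (simp add: \<theta>_def aY_def power2_eq_square field_simps)
  moreover have "0 \<le> aY" using S0 by (simp add: aY_def)
  ultimately have X: "- \<theta> * \<delta> * S0 + real T * \<theta>\<^sup>2 * (2 * S0 / real n) \<le> - 2 * aY"
    by linarith
  show ?thesis
    unfolding \<delta>_def[symmetric] S0_def[symmetric] aY_def[symmetric] minus_mult_left[symmetric]
  proof (rule prob_tau_le_of_exp_drift[OF c \<delta>_def n x0,
        where q = "\<lambda>x. 2 * sqrt (gamma n k x) / real n"])
    show "\<theta> * (2 * sqrt (gamma n k x) / real n) \<le> \<delta> * sqrt (gamma n k x)"
      if "valid_config n k x" for x
      using mult_right_mono[OF \<theta>(3) real_sqrt_ge_zero[OF gamma_nonneg]] by (simp add: \<delta>_def)
  qed (use n \<theta> X valid_config_three_majority_step three_majority_exp_drift in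
    \<open>auto simp: S0_def aY_def \<delta>_def divide_right_mono gamma_nonneg\<close>)
qed

lemma two_choices_prob_tau_le:
  assumes c: "0 < c" "c < 1" and n: "n > 0" and x0: "valid_config n k x0" and T: "T > 0"
  shows "prob_tau_le (two_choices_step n) n k c x0 T
     \<le> real T *
       exp (- (((1 - sqrt (1 - c)) / 2)\<^sup>2 / 32) * (real n / (real T + 1 / sqrt (gamma n k x0))))"
proof -
  define \<delta> where "\<delta> = (1 - sqrt (1 - c)) / 2"
  define S0 where "S0 = sqrt (gamma n k x0)"
  define D where "D = real T * S0 + 1"
  define \<theta> where "\<theta> = \<delta> * real n / (8 * D)"
  have \<delta>: "0 < \<delta>" "\<delta> \<le> 1/2" using c by (auto simp: \<delta>_def)
  have S0: "0 < S0" using gamma_pos[OF n x0] by (simp add: S0_def)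
  have D: "1 \<le> D" "real T * S0 \<le> D" using S0 by (auto simp: D_def)
  have \<theta>: "0 \<le> \<theta>" "\<theta> \<le> real n" "\<theta> / real n \<le> \<delta>"
    using \<delta> n D by (auto simp: \<theta>_def field_simps)
  define aY where "aY = \<delta>\<^sup>2 / 32 * (real n * S0 / D)"
  have aY0: "0 \<le> aY" using S0 D by (simp add: aY_def)
  have "- \<theta> * \<delta> * S0 + real T * \<theta>\<^sup>2 * (S0\<^sup>2 / real n) = - 4 * aY + 1 / 2 * (aY * (real T * S0 / D))"
    using n D by (simp add: \<theta>_def aY_def power2_eq_square field_simps)
  also have "\<dots> \<le> - 4 * aY + 1 / 2 * aY"
    using mult_left_le[OF _ aY0, of "real T * S0 / D"] D
    by (intro add_left_mono mult_left_mono) auto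
  also have "\<dots> \<le> - 2 * aY"
    using aY0 by simp
  finally have X: "- \<theta> * \<delta> * S0 + real T * \<theta>\<^sup>2 * (S0\<^sup>2 / real n) \<le> - 2 * aY" .
  have aY: "aY = \<delta>\<^sup>2 / 32 * (real n / (real T + 1 / S0))"
    using S0 by (simp add: aY_def D_def field_simps)
  show ?thesis
    unfolding \<delta>_def[symmetric] S0_def[symmetric] aY_def[symmetric] minus_mult_left[symmetric]
  proof (rule prob_tau_le_of_exp_drift[OF c \<delta>_def n x0, where q = "\<lambda>x. gamma n k x / real n"])
    show "\<theta> * (gamma n k x / real n) \<le> \<delta> * sqrt (gamma n k x)" if "valid_config n k x" for x
    proof -
      have "sqrt (gamma n k x) \<le> 1" using gamma_le_1[OF n that] by simp
      then have "\<theta> / real n * sqrt (gamma n k x) \<le> \<delta>"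
        using \<theta> \<delta> n by (metis dual_order.trans mult_left_le divide_nonneg_nonneg of_nat_0_le_iff)
      then have "\<theta> / real n * sqrt (gamma n k x) * sqrt (gamma n k x) \<le> \<delta> * sqrt (gamma n k x)"
        by (intro mult_right_mono) (auto simp: gamma_nonneg)
      then show ?thesis using gamma_nonneg[of n k x] by (simp add: mult.assoc)
    qed
  qed (use n \<theta> X S0 valid_config_two_choices_step two_choices_exp_drift in
    \<open>auto simp: S0_def aY \<delta>_def divide_right_mono\<close>)
qed

section \<open>Logarithmic time horizons\<close>

lemma prob_tau_le_0:
  assumes "0 < c" and "0 < gamma n k x0"
  shows "prob_tau_le K n k c x0 0 = 0"
  using assms by (simp add: prob_tau_le_def measure_return mult_less_cancel_right2)

lemma ln_2_ge_half: "1 / 2 \<le> ln (2::real)"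
proof -
  have "exp (1 / 2 :: real) \<le> 1 + 1 / 2 + (1 / 2)\<^sup>2" by (rule exp_bound) auto
  also have "\<dots> \<le> 2" by (simp add: power2_eq_square)
  finally show ?thesis by (subst ln_ge_iff) auto
qed

lemma mult_exp_le_powr_neg_10:
  assumes "n \<ge> 1" and "real T \<le> real n" and "11 * ln (real n) \<le> Y"
  shows "real T * exp (- Y) \<le> real n powr (-10)"
proof -
  have "real T * exp (- Y) \<le> real n * exp (- (11 * ln (real n)))"
    using assms by (intro mult_mono) auto
  also have "\<dots> = real n powr 1 * real n powr (-11)"
    using assms(1) by (simp add: powr_def)
  also have "\<dots> = real n powr (-10)"
    using powr_add[of "real n" 1 "-11"] by simp
  finally show ?thesis .
qed

lemma three_majority_log_time_bounds:
  fixes a C G :: real and n :: nat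
  defines "T \<equiv> nat \<lfloor>C * ln (real n) / G\<rfloor>"
  assumes a: "a > 0" and C: "242 / a\<^sup>2 \<le> C" and n: "n > 0" and G: "G > 0"
    and G_ge: "C * ln (real n) / sqrt (real n) \<le> G" and T: "0 < T"
  shows "real T \<le> real n" and "11 * ln (real n) \<le> a * (real n * sqrt G / real T)"
proof -
  define L where "L = ln (real n)"
  define r where "r = sqrt (real n)"
  have r: "1 \<le> r" "r * r = real n"
    using n by (auto simp: r_def)
  have "r * 1 \<le> r * r" using r(1) by (intro mult_left_mono) auto
  then have "r \<le> real n" by (simp only: mult_1_right r(2))
  have "0 < 242 / a\<^sup>2" using a by simp
  with C have C0: "C > 0" by linarith
  have T_le: "real T \<le> C * L / G" and "1 \<le> C * L / G"
    using T by (auto simp: T_def L_def of_nat_nat)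
  then have "0 < C * L" using G by (simp add: zero_less_divide_iff)
  then have L: "L > 0" using C0 by (simp add: zero_less_mult_iff)
  have CL: "C * L \<le> r * G" using G_ge r by (simp add: L_def r_def field_simps)
  then have "C * L / G \<le> r" using G by (simp add: divide_le_eq mult.commute)
  then show "real T \<le> real n" using T_le \<open>r \<le> real n\<close> by linarith
  define Z where "Z = a * real n * sqrt G * G / (C * L)"
  have "G * real T \<le> C * L" using T_le G by (simp add: field_simps)
  then have Z: "Z \<le> a * (real n * sqrt G / real T)"
    using mult_right_mono[of "G * real T" "C * L" "real n * sqrt G"] T G C0 L a
    by (simp add: Z_def field_simps)
  have "(11 * L)\<^sup>2 \<le> Z\<^sup>2"
  proof -
    have "(11 * L)\<^sup>2 \<le> 242 * L * r"
      using ln_bound[of "sqrt (real n)"] n L by (simp add: L_def r_def ln_sqrt power2_eq_square)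
    also have "\<dots> \<le> (a\<^sup>2 * C) * L * r"
      using C a L r(1) by (intro mult_right_mono) (auto simp: field_simps)
    also have "\<dots> = a\<^sup>2 * (r * r) * (r * r) * (C * L / r) ^ 3 / (C * L)\<^sup>2"
      using C0 L r(1) by (simp add: power_divide power2_eq_square power3_eq_cube)
    also have "\<dots> \<le> a\<^sup>2 * (r * r) * (r * r) * G ^ 3 / (C * L)\<^sup>2"
      using CL C0 L r(1)
      by (intro divide_right_mono mult_left_mono power_mono) (auto simp: field_simps)
    also have "\<dots> = Z\<^sup>2"
      unfolding Z_def r(2)[symmetric] using G by (simp add: power2_eq_square power3_eq_cube)
    finally show ?thesis .
  qed
  moreover have "0 \<le> Z" using a G C0 L by (simp add: Z_def)
  ultimately have "11 * L \<le> Z" by (rule power2_le_imp_le)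
  with Z show "11 * ln (real n) \<le> a * (real n * sqrt G / real T)" by (simp add: L_def)
qed

lemma two_choices_log_time_bounds:
  fixes a C G :: real and n :: nat
  defines "T \<equiv> nat \<lfloor>C * ln (real n) / G\<rfloor>"
  assumes a: "a > 0" and C: "22 / a + 2 \<le> C" and n: "n > 0" and G: "G > 0"
    and G_ge: "(C * ln (real n))\<^sup>2 / real n \<le> G" and T: "0 < T"
  shows "real T \<le> real n" and "11 * ln (real n) \<le> a * (real n / (real T + 1 / sqrt G))"
proof -
  define L where "L = ln (real n)"
  have "0 \<le> 22 / a" using a by simp
  with C have C2: "2 \<le> C" by linarith
  have "a * (22 / a + 2) = 22 + 2 * a" using a by (simp add: field_simps)
  moreover have "a * (22 / a + 2) \<le> a * C" using C a by (intro mult_left_mono) auto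
  ultimately have aC: "22 \<le> a * C" using a by simp
  have T_le: "real T \<le> C * L / G" and "1 \<le> C * L / G"
    using T by (auto simp: T_def L_def of_nat_nat)
  then have "0 < C * L" using G by (simp add: zero_less_divide_iff)
  then have L: "L > 0" using C2 by (simp add: zero_less_mult_iff)
  then have "n \<noteq> 1" by (auto simp: L_def)
  with n have "ln 2 \<le> L" by (simp add: L_def)
  with ln_2_ge_half C2 have CL: "1 \<le> C * L"
    using mult_mono[of 2 C "1 / 2" L] by simp
  have nG: "(C * L)\<^sup>2 \<le> real n * G" using G_ge n by (simp add: L_def pos_divide_le_eq mult.commute)
  have "C * L / G \<le> real n / (C * L)"
    using nG G CL by (simp add: field_simps power2_eq_square)
  with T_le have T_le': "real T \<le> real n / (C * L)" by linarith
  also have "\<dots> \<le> real n" using CL by (simp add: divide_le_eq mult_le_cancel_left1)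
  finally show "real T \<le> real n" .
  have "(C * L / sqrt (real n))\<^sup>2 \<le> (sqrt G)\<^sup>2"
    using nG n G by (simp add: power_divide field_simps)
  then have "C * L / sqrt (real n) \<le> sqrt G"
    by (rule power2_le_imp_le) (use G in simp)
  then have "1 / sqrt G \<le> sqrt (real n) / (C * L)"
    using CL G n by (simp add: field_simps)
  also have "\<dots> \<le> real n / (C * L)"
    using CL n by (intro divide_right_mono real_le_lsqrt) (simp_all add: power2_eq_square)
  finally have den: "real T + 1 / sqrt G \<le> 2 * real n / (C * L)" using T_le' by simp
  have "11 * L \<le> (a * C) * L / 2"
    using mult_right_mono[OF aC, of L] L by simp
  also have "\<dots> = a * (real n / (2 * real n / (C * L)))"
    using n CL by (simp add: field_simps)
  also have "\<dots> \<le> a * (real n / (real T + 1 / sqrt G))"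
  proof (rule mult_left_mono)
    have "0 < real T + 1 / sqrt G" using G by (simp add: add_nonneg_pos)
    then show "real n / (2 * real n / (C * L)) \<le> real n / (real T + 1 / sqrt G)"
      using CL n by (intro divide_left_mono[OF den]) auto
  qed (use a in simp)
  finally show "11 * ln (real n) \<le> a * (real n / (real T + 1 / sqrt G))"
    by (simp add: L_def)
qed

lemma three_majority_tail_bound:
  assumes "0 < c" and "c < 1"
  shows "\<exists>a>0. \<forall>n k x0 (T::nat). 1 \<le> k \<and> k \<le> n \<and> valid_config n k x0 \<and> 0 < T \<longrightarrow>
    prob_tau_le (three_majority_step n) n k c x0 T
      \<le> real T * exp (- a * (real n * sqrt (gamma n k x0) / real T))"
proof (intro exI conjI allI impI)
  show "0 < ((1 - sqrt (1 - c)) / 2)\<^sup>2 / 32" using assms by simp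
next
  fix n k x0 and T :: nat
  assume "1 \<le> k \<and> k \<le> n \<and> valid_config n k x0 \<and> 0 < T"
  then show "prob_tau_le (three_majority_step n) n k c x0 T \<le> real T *
      exp (- (((1 - sqrt (1 - c)) / 2)\<^sup>2 / 32) * (real n * sqrt (gamma n k x0) / real T))"
    using three_majority_prob_tau_le[OF assms] by simp
qed

lemma two_choices_tail_bound:
  assumes "0 < c" and "c < 1"
  shows "\<exists>a>0. \<forall>n k x0 (T::nat). 1 \<le> k \<and> k \<le> n \<and> valid_config n k x0 \<and> 0 < T \<longrightarrow>
    prob_tau_le (two_choices_step n) n k c x0 T
      \<le> real T * exp (- a * (real n / (real T + 1 / sqrt (gamma n k x0))))"
proof (intro exI conjI allI impI)
  show "0 < ((1 - sqrt (1 - c)) / 2)\<^sup>2 / 32" using assms by simp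
next
  fix n k x0 and T :: nat
  assume "1 \<le> k \<and> k \<le> n \<and> valid_config n k x0 \<and> 0 < T"
  then show "prob_tau_le (two_choices_step n) n k c x0 T \<le> real T *
      exp (- (((1 - sqrt (1 - c)) / 2)\<^sup>2 / 32) * (real n / (real T + 1 / sqrt (gamma n k x0))))"
    using two_choices_prob_tau_le[OF assms] by simp
qed

lemma three_majority_whp:
  assumes c: "0 < c" and a: "0 < a"
    and tail: "\<forall>n k x0 (T::nat). 1 \<le> k \<and> k \<le> n \<and> valid_config n k x0 \<and> 0 < T \<longrightarrow>
      prob_tau_le (three_majority_step n) n k c x0 T
        \<le> real T * exp (- a * (real n * sqrt (gamma n k x0) / real T))"
  shows "\<exists>C0. \<forall>C\<ge>C0. \<exists>D>0. \<forall>n k x0. 1 \<le> k \<and> k \<le> n \<and> valid_config n k x0 \<and>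
      gamma n k x0 \<ge> C * ln (real n) / sqrt (real n) \<longrightarrow>
    prob_tau_le (three_majority_step n) n k c x0 (nat \<lfloor>C * ln (real n) / gamma n k x0\<rfloor>)
      \<le> D * real n powr (-10)"
proof (rule exI[of _ "242 / a\<^sup>2"], intro allI impI exI[of _ 1] conjI)
  fix C n k x0
  assume C: "242 / a\<^sup>2 \<le> C" and "1 \<le> k \<and> k \<le> n \<and> valid_config n k x0 \<and>
    C * ln (real n) / sqrt (real n) \<le> gamma n k x0"
  then have kn: "1 \<le> k" "k \<le> n" and x0: "valid_config n k x0"
    and G: "C * ln (real n) / sqrt (real n) \<le> gamma n k x0" by auto
  have \<gamma>: "0 < gamma n k x0" using gamma_pos[OF _ x0] kn by simp
  let ?T = "nat \<lfloor>C * ln (real n) / gamma n k x0\<rfloor>"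
  show "prob_tau_le (three_majority_step n) n k c x0 ?T \<le> 1 * real n powr (-10)"
  proof (cases "?T = 0")
    case True
    then show ?thesis using prob_tau_le_0[OF c \<gamma>] by simp
  next
    case False
    then have "0 < ?T" by simp
    then have "prob_tau_le (three_majority_step n) n k c x0 ?T
        \<le> real ?T * exp (- a * (real n * sqrt (gamma n k x0) / real ?T))"
      using tail kn x0 by blast
    also have "\<dots> \<le> real n powr (-10)"
      unfolding minus_mult_left[symmetric]
      using three_majority_log_time_bounds[OF a C _ \<gamma> G] False kn
      by (intro mult_exp_le_powr_neg_10) auto
    finally show ?thesis by simp
  qed
qed simp

lemma two_choices_whp:
  assumes c: "0 < c" and a: "0 < a"
    and tail: "\<forall>n k x0 (T::nat). 1 \<le> k \<and> k \<le> n \<and> valid_config n k x0 \<and> 0 < T \<longrightarrow>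
      prob_tau_le (two_choices_step n) n k c x0 T
        \<le> real T * exp (- a * (real n / (real T + 1 / sqrt (gamma n k x0))))"
  shows "\<exists>C0. \<forall>C\<ge>C0. \<exists>D>0. \<forall>n k x0. 1 \<le> k \<and> k \<le> n \<and> valid_config n k x0 \<and>
      gamma n k x0 \<ge> (C * ln (real n))\<^sup>2 / real n \<longrightarrow>
    prob_tau_le (two_choices_step n) n k c x0 (nat \<lfloor>C * ln (real n) / gamma n k x0\<rfloor>)
      \<le> D * real n powr (-10)"
proof (rule exI[of _ "22 / a + 2"], intro allI impI exI[of _ 1] conjI)
  fix C n k x0
  assume C: "22 / a + 2 \<le> C" and "1 \<le> k \<and> k \<le> n \<and> valid_config n k x0 \<and>
    (C * ln (real n))\<^sup>2 / real n \<le> gamma n k x0"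
  then have kn: "1 \<le> k" "k \<le> n" and x0: "valid_config n k x0"
    and G: "(C * ln (real n))\<^sup>2 / real n \<le> gamma n k x0" by auto
  have \<gamma>: "0 < gamma n k x0" using gamma_pos[OF _ x0] kn by simp
  let ?T = "nat \<lfloor>C * ln (real n) / gamma n k x0\<rfloor>"
  show "prob_tau_le (two_choices_step n) n k c x0 ?T \<le> 1 * real n powr (-10)"
  proof (cases "?T = 0")
    case True
    then show ?thesis using prob_tau_le_0[OF c \<gamma>] by simp
  next
    case False
    then have "0 < ?T" by simp
    then have "prob_tau_le (two_choices_step n) n k c x0 ?T
        \<le> real ?T * exp (- a * (real n / (real ?T + 1 / sqrt (gamma n k x0))))"
      using tail kn x0 by blast
    also have "\<dots> \<le> real n powr (-10)"
      unfolding minus_mult_left[symmetric] using two_choices_log_time_bounds[OF a C _ \<gamma> G] False kn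
      by (intro mult_exp_le_powr_neg_10) auto
    finally show ?thesis by simp
  qed
qed simp

theorem lemma4p7:
  fixes c\<gamma> :: real
  assumes "0 < c\<gamma>" "c\<gamma> < 1"
  shows
   "(\<exists>a>0. \<forall>n k opn0 (T::nat). 1 \<le> k \<and> k \<le> n \<and> valid_config n k opn0 \<and> 0 < T \<longrightarrow>
       prob_tau_le (three_majority_step n) n k c\<gamma> opn0 T
         \<le> real T * exp (- a * (real n * sqrt (gamma n k opn0) / real T)))
  \<and> (\<exists>a>0. \<forall>n k opn0 (T::nat). 1 \<le> k \<and> k \<le> n \<and> valid_config n k opn0 \<and> 0 < T \<longrightarrow>
       prob_tau_le (two_choices_step n) n k c\<gamma> opn0 T
         \<le> real T * exp (- a * (real n / (real T + 1 / sqrt (gamma n k opn0)))))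
  \<and> (\<exists>C0. \<forall>C\<ge>C0. \<exists>D>0. \<forall>n k opn0. 1 \<le> k \<and> k \<le> n \<and> valid_config n k opn0 \<and>
         gamma n k opn0 \<ge> C * ln (real n) / sqrt (real n) \<longrightarrow>
       prob_tau_le (three_majority_step n) n k c\<gamma> opn0
           (nat \<lfloor>C * ln (real n) / gamma n k opn0\<rfloor>)
         \<le> D * real n powr (-10))
  \<and> (\<exists>C0. \<forall>C\<ge>C0. \<exists>D>0. \<forall>n k opn0. 1 \<le> k \<and> k \<le> n \<and> valid_config n k opn0 \<and>
         gamma n k opn0 \<ge> (C * ln (real n))\<^sup>2 / real n \<longrightarrow>
       prob_tau_le (two_choices_step n) n k c\<gamma> opn0
           (nat \<lfloor>C * ln (real n) / gamma n k opn0\<rfloor>)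
         \<le> D * real n powr (-10))"
proof -
  obtain a3 where a3: "a3 > 0" and tail3: "\<forall>n k opn0 (T::nat). 1 \<le> k \<and> k \<le> n \<and>
      valid_config n k opn0 \<and> 0 < T \<longrightarrow> prob_tau_le (three_majority_step n) n k c\<gamma> opn0 T
        \<le> real T * exp (- a3 * (real n * sqrt (gamma n k opn0) / real T))"
    using three_majority_tail_bound[OF assms] by blast
  obtain a2 where a2: "a2 > 0" and tail2: "\<forall>n k opn0 (T::nat). 1 \<le> k \<and> k \<le> n \<and>
      valid_config n k opn0 \<and> 0 < T \<longrightarrow> prob_tau_le (two_choices_step n) n k c\<gamma> opn0 T
        \<le> real T * exp (- a2 * (real n / (real T + 1 / sqrt (gamma n k opn0))))"
    using two_choices_tail_bound[OF assms] by blast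
  show ?thesis
    using three_majority_whp[OF assms(1) a3 tail3] two_choices_whp[OF assms(1) a2 tail2]
      a3 tail3 a2 tail2 by blast
qed

end
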